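(* Fix integers $L\ge2$, $n$ divisible by $L$, $K\ge1$, and a class $\mathcal H$ of real functions of $s$. With the data, cross-fold risks $R,\widehat R$ and seminorm $\rho_N$ described in the context, suppose $Y\in[-1,1]$ almost surely and $\sup_{h\in\mathcal H}\|h\|_\infty\le1$. Then for every $\epsilon>0$, $\sup_{h_1,h_2\in\mathcal H:\ \rho_N(h_1-h_2)\le\epsilon}\big[(R(h_1)-\widehat R(h_1))-(R(h_2)-\widehat R(h_2))\big]\le2\epsilon.$
   Context: Data: $N=Kn$ independent observations $O_i=(A_i,S_i,Y_i)$, $A_i\in\{1,\dots,K\}$ the cell of unit $i$, each cell containing exactly $n$ units, i.i.d. within cell; fold labels $V_i\in\{1,\dots,L\}$ assigned independently of $(S,Y)$ with exactly $n/L$ units of each cell in each fold. Let $\tilde y(s,a,y)=y$. For $h$ a function of $s$ (or $\tilde y$, replacing $h(S_i)$ by $Y_i$): $[\Pi h](a)=E[h(S)\mid A=a]$, $[\widehat\Pi^v h](a)=(n/L)^{-1}\sum_i h(S_i)\mathbf 1\{A_i=a,V_i=v\}$, $[\widehat\Pi^{-v}h](a)=(n(L-1)/L)^{-1}\sum_i h(S_i)\mathbf 1\{A_i=a,V_i\neq v\}$. Population cross-fold risk $R(h)=-\frac1K\sum_{a}[\Pi\tilde y](a)[\Pi h](a)+\frac1{2K}\sum_a([\Pi h](a))^2$ (equivalently $-E[E[Y\mid A,V=\widetilde V]E[h(S)\mid A,V\ne\widetilde V]]+\frac12E[E[h(S)\mid A,V=\widetilde V]E[h(S)\mid A,V\ne\widetilde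 V]]$ with $\widetilde V$ an independent copy of the fold label); empirical cross-fold risk $\widehat R(h)=\frac1L\sum_{v=1}^L\frac1K\sum_{a=1}^K\big(-[\widehat\Pi^v\tilde y](a)[\widehat\Pi^{-v}h](a)+\frac12[\widehat\Pi^vh](a)[\widehat\Pi^{-v}h](a)\big)$. Norms: $\|f\|_{1,N}=\frac1N\sum_i|f(O_i)|$, $\|u\|_{1,K}=\frac1K\sum_a|u(a)|$, $\rho_N(f)=\|\Pi f\|_{1,K}+\|f\|_{1,N}$. *)

theory Defs
  imports "HOL-Probability.Probability"
begin

text \<open>Cells are 1..K, folds are 1..L, units are 0..<N with N = K*n.
  A realised sample is d :: nat => ('s * real), d i = (S_i, Y_i).
  Functions of an observation are functions of (s, y); the cell label is
  carried separately by the design map A.\<close>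

definition N_of :: "nat \<Rightarrow> nat \<Rightarrow> nat" where
  "N_of K n = K * n"

text \<open>Population projection [Pi f](a) = E[f(S,Y) | A = a], with P a the
  common law of (S_i, Y_i) for units in cell a.\<close>
definition Pi_pop :: "(nat \<Rightarrow> ('s \<times> real) measure) \<Rightarrow> ('s \<times> real \<Rightarrow> real) \<Rightarrow> nat \<Rightarrow> real" where
  "Pi_pop P f a = (\<integral>x. f x \<partial>(P a))"

definition Pi_in :: "nat \<Rightarrow> nat \<Rightarrow> nat \<Rightarrow> (nat \<Rightarrow> nat) \<Rightarrow> (nat \<Rightarrow> nat) \<Rightarrow> (nat \<Rightarrow> 's \<times> real)
    \<Rightarrow> ('s \<times> real \<Rightarrow> real) \<Rightarrow> nat \<Rightarrow> nat \<Rightarrow> real" where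
  "Pi_in K n L A V d f v a =
     inverse (real n / real L) * (\<Sum>i<N_of K n. if A i = a \<and> V i = v then f (d i) else 0)"

definition Pi_out :: "nat \<Rightarrow> nat \<Rightarrow> nat \<Rightarrow> (nat \<Rightarrow> nat) \<Rightarrow> (nat \<Rightarrow> nat) \<Rightarrow> (nat \<Rightarrow> 's \<times> real)
    \<Rightarrow> ('s \<times> real \<Rightarrow> real) \<Rightarrow> nat \<Rightarrow> nat \<Rightarrow> real" where
  "Pi_out K n L A V d f v a =
     inverse (real n * (real L - 1) / real L) * (\<Sum>i<N_of K n. if A i = a \<and> V i \<noteq> v then f (d i) else 0)"

definition ytil :: "'s \<times> real \<Rightarrow> real" where
  "ytil x = snd x"

definition liftS :: "('s \<Rightarrow> real) \<Rightarrow> 's \<times> real \<Rightarrow> real" where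
  "liftS h x = h (fst x)"

definition pop_risk :: "nat \<Rightarrow> (nat \<Rightarrow> ('s \<times> real) measure) \<Rightarrow> ('s \<Rightarrow> real) \<Rightarrow> real" where
  "pop_risk K P h =
     - (1 / real K) * (\<Sum>a\<in>{1..K}. Pi_pop P ytil a * Pi_pop P (liftS h) a)
     + (1 / (2 * real K)) * (\<Sum>a\<in>{1..K}. (Pi_pop P (liftS h) a)\<^sup>2)"

definition emp_risk :: "nat \<Rightarrow> nat \<Rightarrow> nat \<Rightarrow> (nat \<Rightarrow> nat) \<Rightarrow> (nat \<Rightarrow> nat) \<Rightarrow> (nat \<Rightarrow> 's \<times> real)
    \<Rightarrow> ('s \<Rightarrow> real) \<Rightarrow> real" where
  "emp_risk K n L A V d h =
     (1 / real L) * (\<Sum>v\<in>{1..L}. (1 / real K) * (\<Sum>a\<in>{1..K}.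
        - Pi_in K n L A V d ytil v a * Pi_out K n L A V d (liftS h) v a
        + (1/2) * Pi_in K n L A V d (liftS h) v a * Pi_out K n L A V d (liftS h) v a))"

definition norm1N :: "nat \<Rightarrow> nat \<Rightarrow> (nat \<Rightarrow> 's \<times> real) \<Rightarrow> ('s \<times> real \<Rightarrow> real) \<Rightarrow> real" where
  "norm1N K n d f = (1 / real (N_of K n)) * (\<Sum>i<N_of K n. \<bar>f (d i)\<bar>)"

definition norm1K :: "nat \<Rightarrow> (nat \<Rightarrow> real) \<Rightarrow> real" where
  "norm1K K u = (1 / real K) * (\<Sum>a\<in>{1..K}. \<bar>u a\<bar>)"

definition rhoN :: "nat \<Rightarrow> nat \<Rightarrow> (nat \<Rightarrow> ('s \<times> real) measure) \<Rightarrow> (nat \<Rightarrow> 's \<times> real)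
    \<Rightarrow> ('s \<times> real \<Rightarrow> real) \<Rightarrow> real" where
  "rhoN K n P d f = norm1K K (Pi_pop P f) + norm1N K n d f"

end

theory Submission
  imports Defs
begin

text \<open>Both risks are averages of the same form \<open>cross_loss y p q = - y q + p q / 2\<close>, where \<open>y\<close>
  is a mean of \<open>Y\<close> and \<open>p\<close>, \<open>q\<close> are the in-fold and out-of-fold means of \<open>h\<close> (for \<open>R\<close> both
  are \<open>\<Pi> h\<close>). As all these means lie in \<open>[-1, 1]\<close>, replacing \<open>h\<^sub>1\<close> by \<open>h\<^sub>2\<close> moves
  \<open>cross_loss\<close> by at most \<open>3/2 |\<Delta>q| + 1/2 |\<Delta>p|\<close>. For \<open>R\<close> this is \<open>2 |\<Pi>(h\<^sub>1 - h\<^sub>2)|\<close> per cell.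
  For \<open>R-hat\<close>, every unit lies in exactly one in-fold block and in \<open>L - 1\<close> out-of-fold blocks,
  so with the normalisations \<open>n/L\<close> and \<open>n(L-1)/L\<close> the absolute values of either family of
  empirical projections of \<open>h\<^sub>1 - h\<^sub>2\<close> sum to at most \<open>(L/n) \<Sum>\<^sub>i |h\<^sub>1 - h\<^sub>2|(S\<^sub>i)\<close>. Adding the two bounds gives
  \<open>2 \<rho>\<^sub>N(h\<^sub>1 - h\<^sub>2)\<close>.\<close>

lemma abs_masked_sum_le_card:
  fixes g :: "nat \<Rightarrow> real"
  assumes "\<forall>i<N. P i \<longrightarrow> \<bar>g i\<bar> \<le> 1"
  shows "\<bar>\<Sum>i<N. if P i then g i else 0\<bar> \<le> real (card {i. i < N \<and> P i})"
proof -
  have "(\<Sum>i<N. if P i then g i else 0) = (\<Sum>i\<in>{i. i < N \<and> P i}. g i)"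
    by (simp add: sum.inter_filter[symmetric] conj_commute)
  also have "\<bar>\<dots>\<bar> \<le> (\<Sum>i\<in>{i. i < N \<and> P i}. \<bar>g i\<bar>)"
    by (rule sum_abs)
  also have "\<dots> \<le> real (card {i. i < N \<and> P i}) * 1"
    by (rule sum_bounded_above) (use assms in auto)
  finally show ?thesis by simp
qed

lemma sum_abs_masked_sum_le:
  fixes g :: "nat \<Rightarrow> real"
  assumes "finite J" "c \<ge> 0"
  shows "(\<Sum>j\<in>J. \<bar>c * (\<Sum>i<N. if Q j i then g i else 0)\<bar>)
           \<le> c * (\<Sum>i<N. real (card {j\<in>J. Q j i}) * \<bar>g i\<bar>)"
proof -
  have "(\<Sum>j\<in>J. \<bar>\<Sum>i<N. if Q j i then g i else 0\<bar>) \<le> (\<Sum>j\<in>J. \<Sum>i<N. if Q j i then \<bar>g i\<bar> else 0)"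
    by (intro sum_mono order.trans[OF sum_abs]) simp
  also have "\<dots> = (\<Sum>i<N. \<Sum>j\<in>J. if Q j i then \<bar>g i\<bar> else 0)"
    by (rule sum.swap)
  also have "\<dots> = (\<Sum>i<N. real (card {j\<in>J. Q j i}) * \<bar>g i\<bar>)"
    using assms by (simp add: sum.inter_filter[symmetric])
  finally show ?thesis
    using assms by (simp add: abs_mult sum_distrib_left[symmetric] mult_left_mono)
qed

definition cross_loss :: "real \<Rightarrow> real \<Rightarrow> real \<Rightarrow> real" where
  "cross_loss y p q = - y * q + p * q / 2"

lemma cross_loss_diff_le:
  assumes "\<bar>y\<bar> \<le> 1" "\<bar>q1\<bar> \<le> 1" "\<bar>p2\<bar> \<le> 1"
  shows "\<bar>cross_loss y p1 q1 - cross_loss y p2 q2\<bar> \<le> 3/2 * \<bar>q1 - q2\<bar> + 1/2 * \<bar>p1 - p2\<bar>"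
proof -
  have "cross_loss y p1 q1 - cross_loss y p2 q2 = - y * (q1 - q2) + (p1 - p2) * q1 / 2 + p2 * (q1 - q2) / 2"
    unfolding cross_loss_def by (simp add: field_simps)
  moreover have "\<bar>y * (q1 - q2)\<bar> \<le> \<bar>q1 - q2\<bar>" "\<bar>(p1 - p2) * q1\<bar> \<le> \<bar>p1 - p2\<bar>" "\<bar>p2 * (q1 - q2)\<bar> \<le> \<bar>q1 - q2\<bar>"
    using assms by (simp_all add: abs_mult mult_left_le_one_le mult_right_le_one_le)
  ultimately show ?thesis by (simp add: abs_le_iff)
qed

lemma sum_cross_loss_diff_le:
  assumes "\<forall>j\<in>J. \<bar>y j\<bar> \<le> 1 \<and> \<bar>q1 j\<bar> \<le> 1 \<and> \<bar>p2 j\<bar> \<le> 1"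
  shows "\<bar>(\<Sum>j\<in>J. cross_loss (y j) (p1 j) (q1 j)) - (\<Sum>j\<in>J. cross_loss (y j) (p2 j) (q2 j))\<bar>
           \<le> (\<Sum>j\<in>J. 3/2 * \<bar>q1 j - q2 j\<bar> + 1/2 * \<bar>p1 j - p2 j\<bar>)"
  unfolding sum_subtractf[symmetric]
  by (intro order.trans[OF sum_abs] sum_mono cross_loss_diff_le) (use assms in auto)

lemma masked_sum_diff:
  "(\<Sum>i<N. if P i then f i - g i else 0) = (\<Sum>i<N. if P i then f i else 0) - (\<Sum>i<N. if P i then g i else (0::real))"
  by (subst sum_subtractf[symmetric]) (rule sum.cong, auto)

lemma Pi_in_diff:
  "Pi_in K n L A V d (\<lambda>x. f x - g x) v a = Pi_in K n L A V d f v a - Pi_in K n L A V d g v a"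
  unfolding Pi_in_def masked_sum_diff by (simp add: right_diff_distrib)

lemma Pi_out_diff:
  "Pi_out K n L A V d (\<lambda>x. f x - g x) v a = Pi_out K n L A V d f v a - Pi_out K n L A V d g v a"
  unfolding Pi_out_def masked_sum_diff by (simp add: right_diff_distrib)

lemma liftS_diff: "liftS (\<lambda>s. h1 s - h2 s) = (\<lambda>x. liftS h1 x - liftS h2 x)"
  by (simp add: liftS_def fun_eq_iff)

lemma emp_risk_eq_mean_cross_loss:
  "emp_risk K n L A V d h = (\<Sum>(v, a)\<in>{1..L} \<times> {1..K}.
     cross_loss (Pi_in K n L A V d ytil v a) (Pi_in K n L A V d (liftS h) v a)
       (Pi_out K n L A V d (liftS h) v a)) / (real L * real K)"
  unfolding emp_risk_def cross_loss_def sum.cartesian_product[symmetric]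
  by (simp add: sum_divide_distrib sum_distrib_left field_simps)

lemma pop_risk_eq_mean_cross_loss:
  "pop_risk K P h = (\<Sum>a\<in>{1..K}.
     cross_loss (Pi_pop P ytil a) (Pi_pop P (liftS h) a) (Pi_pop P (liftS h) a)) / real K"
  unfolding pop_risk_def cross_loss_def
  by (simp add: sum_divide_distrib sum_distrib_left sum.distrib[symmetric] power2_eq_square field_simps)

lemma integrable_abs_integral_le_1:
  fixes f :: "'a \<Rightarrow> real"
  assumes Q: "prob_space Q" and f: "f \<in> borel_measurable Q" and bound: "AE x in Q. \<bar>f x\<bar> \<le> 1"
  shows "integrable Q f" "\<bar>\<integral>x. f x \<partial>Q\<bar> \<le> 1"
proof -
  interpret prob_space Q by (rule Q)
  show int: "integrable Q f"
    by (rule integrable_const_bound[where B=1]) (use bound f in auto)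
  have "\<bar>\<integral>x. f x \<partial>Q\<bar> \<le> (\<integral>x. \<bar>f x\<bar> \<partial>Q)"
    by (rule integral_abs_bound)
  also have "\<dots> \<le> (\<integral>x. 1 \<partial>Q)"
    by (rule integral_mono_AE) (use int bound in auto)
  finally show "\<bar>\<integral>x. f x \<partial>Q\<bar> \<le> 1"
    by (simp add: prob_space)
qed

lemma observation_law_integral_bounds:
  fixes Q :: "('s \<times> real) measure" and Ms :: "'s measure"
  assumes Q: "prob_space Q" and sets_Q: "sets Q = sets (Ms \<Otimes>\<^sub>M borel)"
    and Y_bound: "AE x in Q. \<bar>snd x\<bar> \<le> 1"
    and h_meas: "h \<in> borel_measurable Ms" and h_bound: "\<forall>s\<in>space Ms. \<bar>h s\<bar> \<le> 1"
  shows "\<bar>\<integral>x. ytil x \<partial>Q\<bar> \<le> 1" "integrable Q (liftS h)" "\<bar>\<integral>x. liftS h x \<partial>Q\<bar> \<le> 1"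
proof -
  have "ytil \<in> borel_measurable Q"
    unfolding ytil_def measurable_cong_sets[OF sets_Q refl] by simp
  moreover have "AE x in Q. \<bar>ytil x\<bar> \<le> 1"
    using Y_bound by (simp add: ytil_def)
  ultimately show "\<bar>\<integral>x. ytil x \<partial>Q\<bar> \<le> 1"
    by (rule integrable_abs_integral_le_1(2)[OF Q])
  have h_meas_Q: "liftS h \<in> borel_measurable Q"
    unfolding liftS_def measurable_cong_sets[OF sets_Q refl] by (rule measurable_compose[OF measurable_fst h_meas])
  have h_bound_Q: "AE x in Q. \<bar>liftS h x\<bar> \<le> 1"
    using h_bound sets_eq_imp_space_eq[OF sets_Q]
    by (intro AE_I2) (auto simp: liftS_def space_pair_measure)
  show "integrable Q (liftS h)" "\<bar>\<integral>x. liftS h x \<partial>Q\<bar> \<le> 1"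
    using integrable_abs_integral_le_1[OF Q h_meas_Q h_bound_Q] by simp_all
qed

lemma pop_risk_diff_le:
  fixes P :: "nat \<Rightarrow> ('s \<times> real) measure" and Ms :: "'s measure"
  assumes cell_law: "\<forall>a\<in>{1..K}. prob_space (P a) \<and> sets (P a) = sets (Ms \<Otimes>\<^sub>M borel)
                        \<and> (AE x in P a. \<bar>snd x\<bar> \<le> 1)"
    and h1: "h1 \<in> borel_measurable Ms" "\<forall>s\<in>space Ms. \<bar>h1 s\<bar> \<le> 1"
    and h2: "h2 \<in> borel_measurable Ms" "\<forall>s\<in>space Ms. \<bar>h2 s\<bar> \<le> 1"
  shows "\<bar>pop_risk K P h1 - pop_risk K P h2\<bar> \<le> 2 * norm1K K (Pi_pop P (liftS (\<lambda>s. h1 s - h2 s)))"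
proof -
  let ?g = "liftS (\<lambda>s. h1 s - h2 s)"
  have bounds: "\<bar>Pi_pop P ytil a\<bar> \<le> 1 \<and> \<bar>Pi_pop P (liftS h1) a\<bar> \<le> 1 \<and> \<bar>Pi_pop P (liftS h2) a\<bar> \<le> 1"
    and diff: "Pi_pop P ?g a = Pi_pop P (liftS h1) a - Pi_pop P (liftS h2) a"
    if "a \<in> {1..K}" for a
  proof -
    from cell_law that have Q: "prob_space (P a)" "sets (P a) = sets (Ms \<Otimes>\<^sub>M borel)"
      "AE x in P a. \<bar>snd x\<bar> \<le> 1" by auto
    note facts1 = observation_law_integral_bounds[OF Q h1] and facts2 = observation_law_integral_bounds[OF Q h2]
    show "\<bar>Pi_pop P ytil a\<bar> \<le> 1 \<and> \<bar>Pi_pop P (liftS h1) a\<bar> \<le> 1 \<and> \<bar>Pi_pop P (liftS h2) a\<bar> \<le> 1"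
      using facts1 facts2 by (simp add: Pi_pop_def)
    show "Pi_pop P ?g a = Pi_pop P (liftS h1) a - Pi_pop P (liftS h2) a"
      unfolding Pi_pop_def liftS_diff by (rule Bochner_Integration.integral_diff[OF facts1(2) facts2(2)])
  qed
  let ?p = "\<lambda>h. Pi_pop P (liftS h)"
  have "\<bar>pop_risk K P h1 - pop_risk K P h2\<bar>
      \<le> (\<Sum>a\<in>{1..K}. 3/2 * \<bar>?p h1 a - ?p h2 a\<bar> + 1/2 * \<bar>?p h1 a - ?p h2 a\<bar>) / real K"
    unfolding pop_risk_eq_mean_cross_loss diff_divide_distrib[symmetric] abs_divide abs_of_nat
    by (intro divide_right_mono sum_cross_loss_diff_le) (use bounds in auto)
  also have "\<dots> = (\<Sum>a\<in>{1..K}. 3/2 * \<bar>Pi_pop P ?g a\<bar> + 1/2 * \<bar>Pi_pop P ?g a\<bar>) / real K"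
    using diff by simp
  also have "\<dots> = 2 * norm1K K (Pi_pop P ?g)"
    by (simp add: norm1K_def sum_distrib_left[symmetric])
  finally show ?thesis .
qed

lemma distr_observation_law:
  fixes Y :: "'a \<Rightarrow> real"
  assumes M: "prob_space M" and S: "S \<in> measurable M Ms" and Y: "Y \<in> borel_measurable M"
    and Y_bound: "AE \<omega> in M. \<bar>Y \<omega>\<bar> \<le> 1"
  shows "prob_space (distr M (Ms \<Otimes>\<^sub>M borel) (\<lambda>\<omega>. (S \<omega>, Y \<omega>)))"
    "AE x in distr M (Ms \<Otimes>\<^sub>M borel) (\<lambda>\<omega>. (S \<omega>, Y \<omega>)). \<bar>snd x\<bar> \<le> 1"
proof -
  have X: "(\<lambda>\<omega>. (S \<omega>, Y \<omega>)) \<in> M \<rightarrow>\<^sub>M Ms \<Otimes>\<^sub>M borel"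
    using S Y by measurable
  show "prob_space (distr M (Ms \<Otimes>\<^sub>M borel) (\<lambda>\<omega>. (S \<omega>, Y \<omega>)))"
    by (rule prob_space.prob_space_distr[OF M X])
  show "AE x in distr M (Ms \<Otimes>\<^sub>M borel) (\<lambda>\<omega>. (S \<omega>, Y \<omega>)). \<bar>snd x\<bar> \<le> 1"
    by (subst AE_distr_iff[OF X]) (measurable, use Y_bound in simp)
qed

locale cross_fold_design =
  fixes K n L :: nat and A V :: "nat \<Rightarrow> nat"
  assumes two_le_L: "L \<ge> 2" and L_dvd_n: "L dvd n" and n_pos: "n > 0"
    and A_range: "\<forall>i<K*n. A i \<in> {1..K}"
    and V_range: "\<forall>i<K*n. V i \<in> {1..L}"
    and cell_size: "\<forall>a\<in>{1..K}. card {i. i < K*n \<and> A i = a} = n"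
    and fold_size: "\<forall>a\<in>{1..K}. \<forall>v\<in>{1..L}. card {i. i < K*n \<and> A i = a \<and> V i = v} = n div L"
begin

lemma cell_nonempty:
  assumes "a \<in> {1..K}"
  obtains i where "i < K*n" "A i = a"
proof -
  have "card {i. i < K*n \<and> A i = a} \<noteq> 0"
    using cell_size assms n_pos by auto
  then show ?thesis
    using that by (metis (mono_tags, lifting) card.empty empty_Collect_eq)
qed

lemma card_out_of_fold:
  assumes "a \<in> {1..K}" "v \<in> {1..L}"
  shows "card {i. i < K*n \<and> A i = a \<and> V i \<noteq> v} = n - n div L"
proof -
  have "{i. i < K*n \<and> A i = a}
      = {i. i < K*n \<and> A i = a \<and> V i = v} \<union> {i. i < K*n \<and> A i = a \<and> V i \<noteq> v}"
    by auto
  then have "card {i. i < K*n \<and> A i = a}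
      = card {i. i < K*n \<and> A i = a \<and> V i = v} + card {i. i < K*n \<and> A i = a \<and> V i \<noteq> v}"
    by (simp add: card_Un_disjoint disjoint_iff)
  then show ?thesis
    using cell_size fold_size assms by auto
qed

lemma real_fold_size: "real (n div L) = real n / real L"
  using L_dvd_n by (simp add: real_of_nat_div)

lemma in_fold_scale: "inverse (real n / real L) * real (n div L) = 1"
  using n_pos two_le_L by (simp add: real_fold_size)

lemma out_of_fold_scale: "inverse (real n * (real L - 1) / real L) * real (n - n div L) = 1"
  using n_pos two_le_L by (simp add: real_fold_size field_simps)

lemma abs_Pi_in_le_1:
  assumes "\<forall>i<K*n. \<bar>f (d i)\<bar> \<le> 1" "a \<in> {1..K}" "v \<in> {1..L}"
  shows "\<bar>Pi_in K n L A V d f v a\<bar> \<le> 1"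
proof -
  have "\<bar>Pi_in K n L A V d f v a\<bar>
      = inverse (real n / real L) * \<bar>\<Sum>i<K*n. if A i = a \<and> V i = v then f (d i) else 0\<bar>"
    unfolding Pi_in_def N_of_def by (simp add: abs_mult)
  also have "\<dots> \<le> inverse (real n / real L) * real (n div L)"
    using abs_masked_sum_le_card[of "K*n" "\<lambda>i. A i = a \<and> V i = v"] fold_size assms
    by (intro mult_left_mono) auto
  finally show ?thesis
    by (simp only: in_fold_scale)
qed

lemma abs_Pi_out_le_1:
  assumes "\<forall>i<K*n. \<bar>f (d i)\<bar> \<le> 1" "a \<in> {1..K}" "v \<in> {1..L}"
  shows "\<bar>Pi_out K n L A V d f v a\<bar> \<le> 1"
proof -
  have "\<bar>Pi_out K n L A V d f v a\<bar>
      = inverse (real n * (real L - 1) / real L) * \<bar>\<Sum>i<K*n. if A i = a \<and> V i \<noteq> v then f (d i) else 0\<bar>"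
    unfolding Pi_out_def N_of_def using two_le_L by (simp add: abs_mult)
  also have "\<dots> \<le> inverse (real n * (real L - 1) / real L) * real (n - n div L)"
    using abs_masked_sum_le_card[of "K*n" "\<lambda>i. A i = a \<and> V i \<noteq> v"] card_out_of_fold assms two_le_L
    by (intro mult_left_mono) auto
  finally show ?thesis
    by (simp only: out_of_fold_scale)
qed

lemma card_in_folds:
  assumes "i < K*n"
  shows "card {(v, a) \<in> {1..L} \<times> {1..K}. A i = a \<and> V i = v} = 1"
proof -
  have "{(v, a) \<in> {1..L} \<times> {1..K}. A i = a \<and> V i = v} = {(V i, A i)}"
    using A_range V_range assms by auto
  then show ?thesis by simp
qed

lemma card_out_of_folds:
  assumes "i < K*n"
  shows "card {(v, a) \<in> {1..L} \<times> {1..K}. A i = a \<and> V i \<noteq> v} = L - 1"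
proof -
  have "{(v, a) \<in> {1..L} \<times> {1..K}. A i = a \<and> V i \<noteq> v} = ({1..L} - {V i}) \<times> {A i}"
    using A_range V_range assms by auto
  then show ?thesis
    using V_range assms by (simp add: card_cartesian_product)
qed

lemma sum_abs_Pi_in_le:
  "(\<Sum>(v, a)\<in>{1..L} \<times> {1..K}. \<bar>Pi_in K n L A V d f v a\<bar>) \<le> real L / real n * (\<Sum>i<K*n. \<bar>f (d i)\<bar>)"
proof -
  let ?Q = "\<lambda>(v, a) i. A i = a \<and> V i = v"
  have pairs: "{j \<in> {1..L} \<times> {1..K}. ?Q j i} = {(v, a) \<in> {1..L} \<times> {1..K}. A i = a \<and> V i = v}" for i
    by auto
  have "(\<Sum>(v, a)\<in>{1..L} \<times> {1..K}. \<bar>Pi_in K n L A V d f v a\<bar>)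
      = (\<Sum>j\<in>{1..L} \<times> {1..K}. \<bar>inverse (real n / real L) * (\<Sum>i<K*n. if ?Q j i then f (d i) else 0)\<bar>)"
    by (rule sum.cong) (auto simp: Pi_in_def N_of_def)
  also have "\<dots> \<le> inverse (real n / real L) * (\<Sum>i<K*n. real (card {j \<in> {1..L} \<times> {1..K}. ?Q j i}) * \<bar>f (d i)\<bar>)"
    by (rule sum_abs_masked_sum_le) simp_all
  also have "(\<Sum>i<K*n. real (card {j \<in> {1..L} \<times> {1..K}. ?Q j i}) * \<bar>f (d i)\<bar>)
      = (\<Sum>i<K*n. \<bar>f (d i)\<bar>)"
    unfolding pairs by (rule sum.cong[OF refl], subst card_in_folds) auto
  finally show ?thesis by simp
qed

lemma sum_abs_Pi_out_le:
  "(\<Sum>(v, a)\<in>{1..L} \<times> {1..K}. \<bar>Pi_out K n L A V d f v a\<bar>) \<le> real L / real n * (\<Sum>i<K*n. \<bar>f (d i)\<bar>)"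
proof -
  let ?Q = "\<lambda>(v, a) i. A i = a \<and> V i \<noteq> v"
  have pairs: "{j \<in> {1..L} \<times> {1..K}. ?Q j i} = {(v, a) \<in> {1..L} \<times> {1..K}. A i = a \<and> V i \<noteq> v}" for i
    by auto
  let ?c = "inverse (real n * (real L - 1) / real L)"
  have "(\<Sum>(v, a)\<in>{1..L} \<times> {1..K}. \<bar>Pi_out K n L A V d f v a\<bar>)
      = (\<Sum>j\<in>{1..L} \<times> {1..K}. \<bar>?c * (\<Sum>i<K*n. if ?Q j i then f (d i) else 0)\<bar>)"
    by (rule sum.cong) (auto simp: Pi_out_def N_of_def)
  also have "\<dots> \<le> ?c * (\<Sum>i<K*n. real (card {j \<in> {1..L} \<times> {1..K}. ?Q j i}) * \<bar>f (d i)\<bar>)"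
    by (rule sum_abs_masked_sum_le) (use two_le_L in simp_all)
  also have "(\<Sum>i<K*n. real (card {j \<in> {1..L} \<times> {1..K}. ?Q j i}) * \<bar>f (d i)\<bar>)
      = (real L - 1) * (\<Sum>i<K*n. \<bar>f (d i)\<bar>)"
    unfolding pairs sum_distrib_left
    by (rule sum.cong[OF refl], subst card_out_of_folds) (use two_le_L in auto)
  also have "?c * ((real L - 1) * (\<Sum>i<K*n. \<bar>f (d i)\<bar>)) = real L / real n * (\<Sum>i<K*n. \<bar>f (d i)\<bar>)"
    using two_le_L n_pos by (simp add: field_simps)
  finally show ?thesis .
qed

lemma emp_risk_diff_le:
  assumes bound: "\<forall>i<K*n. \<bar>snd (d i)\<bar> \<le> 1 \<and> \<bar>h1 (fst (d i))\<bar> \<le> 1 \<and> \<bar>h2 (fst (d i))\<bar> \<le> 1"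
  shows "\<bar>emp_risk K n L A V d h1 - emp_risk K n L A V d h2\<bar> \<le> 2 * norm1N K n d (liftS (\<lambda>s. h1 s - h2 s))"
proof -
  let ?g = "liftS (\<lambda>s. h1 s - h2 s)" and ?J = "{1..L} \<times> {1..K}"
  let ?p = "\<lambda>h j. Pi_in K n L A V d (liftS h) (fst j) (snd j)"
    and ?q = "\<lambda>h j. Pi_out K n L A V d (liftS h) (fst j) (snd j)"
  have "\<bar>emp_risk K n L A V d h1 - emp_risk K n L A V d h2\<bar>
      \<le> (\<Sum>j\<in>?J. 3/2 * \<bar>?q h1 j - ?q h2 j\<bar> + 1/2 * \<bar>?p h1 j - ?p h2 j\<bar>) / (real L * real K)"
    unfolding emp_risk_eq_mean_cross_loss diff_divide_distrib[symmetric] abs_divide abs_mult abs_of_nat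
      case_prod_unfold
    by (intro divide_right_mono sum_cross_loss_diff_le)
       (use bound in \<open>auto intro!: abs_Pi_in_le_1 abs_Pi_out_le_1 simp: ytil_def liftS_def\<close>)
  also have "\<dots> = (3/2 * (\<Sum>(v, a)\<in>?J. \<bar>Pi_out K n L A V d ?g v a\<bar>)
                   + 1/2 * (\<Sum>(v, a)\<in>?J. \<bar>Pi_in K n L A V d ?g v a\<bar>)) / (real L * real K)"
    unfolding liftS_diff Pi_in_diff Pi_out_diff
    by (simp add: sum.distrib sum_distrib_left case_prod_unfold)
  also have "\<dots> \<le> (3/2 * (real L / real n * (\<Sum>i<K*n. \<bar>?g (d i)\<bar>))
                   + 1/2 * (real L / real n * (\<Sum>i<K*n. \<bar>?g (d i)\<bar>))) / (real L * real K)"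
    by (intro divide_right_mono add_mono mult_left_mono sum_abs_Pi_in_le sum_abs_Pi_out_le) auto
  also have "\<dots> = 2 * norm1N K n d ?g"
    unfolding norm1N_def N_of_def using two_le_L n_pos by (simp add: field_simps)
  finally show ?thesis .
qed

end

lemma (in cross_fold_design) cell_laws_bounded:
  fixes Y :: "nat \<Rightarrow> 'w \<Rightarrow> real"
  assumes M: "prob_space M"
    and S_meas: "\<forall>i<K*n. S i \<in> measurable M Ms"
    and Y_meas: "\<forall>i<K*n. Y i \<in> borel_measurable M"
    and ident: "\<forall>i<K*n. distr M (Ms \<Otimes>\<^sub>M borel) (\<lambda>\<omega>. (S i \<omega>, Y i \<omega>)) = P (A i)"
    and Y_bound: "\<forall>i<K*n. AE \<omega> in M. \<bar>Y i \<omega>\<bar> \<le> 1"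
  shows "\<forall>a\<in>{1..K}. prob_space (P a) \<and> sets (P a) = sets (Ms \<Otimes>\<^sub>M borel)
           \<and> (AE x in P a. \<bar>snd x\<bar> \<le> 1)"
proof
  fix a assume "a \<in> {1..K}"
  then obtain i where i: "i < K*n" "A i = a" by (rule cell_nonempty)
  then have P_a: "P a = distr M (Ms \<Otimes>\<^sub>M borel) (\<lambda>\<omega>. (S i \<omega>, Y i \<omega>))"
    using ident by auto
  show "prob_space (P a) \<and> sets (P a) = sets (Ms \<Otimes>\<^sub>M borel) \<and> (AE x in P a. \<bar>snd x\<bar> \<le> 1)"
    unfolding P_a using distr_observation_law[OF M, of "S i" Ms "Y i"] S_meas Y_meas Y_bound i by simp
qed

theorem lemma4:
  fixes M :: "'w measure" and Ms :: "'s measure"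
    and S :: "nat \<Rightarrow> 'w \<Rightarrow> 's" and Y :: "nat \<Rightarrow> 'w \<Rightarrow> real"
    and A V :: "nat \<Rightarrow> nat"
    and P :: "nat \<Rightarrow> ('s \<times> real) measure"
    and H :: "('s \<Rightarrow> real) set"
    and K n L :: nat
  assumes M: "prob_space M"
    and L2: "L \<ge> 2" and Ldvd: "L dvd n" and npos: "n > 0" and K1: "K \<ge> 1"
    and A_range: "\<forall>i<K*n. A i \<in> {1..K}"
    and V_range: "\<forall>i<K*n. V i \<in> {1..L}"
    and cell_size: "\<forall>a\<in>{1..K}. card {i. i < K*n \<and> A i = a} = n"
    and fold_size: "\<forall>a\<in>{1..K}. \<forall>v\<in>{1..L}. card {i. i < K*n \<and> A i = a \<and> V i = v} = n div L"
    and S_meas: "\<forall>i<K*n. S i \<in> measurable M Ms"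
    and Y_meas: "\<forall>i<K*n. Y i \<in> borel_measurable M"
    and indep: "prob_space.indep_vars M (\<lambda>_. Ms \<Otimes>\<^sub>M borel) (\<lambda>i \<omega>. (S i \<omega>, Y i \<omega>)) {..<K*n}"
    and ident: "\<forall>i<K*n. distr M (Ms \<Otimes>\<^sub>M borel) (\<lambda>\<omega>. (S i \<omega>, Y i \<omega>)) = P (A i)"
    and Y_bound: "\<forall>i<K*n. AE \<omega> in M. \<bar>Y i \<omega>\<bar> \<le> 1"
    and H_meas: "\<forall>h\<in>H. h \<in> borel_measurable Ms"
    and H_bound: "\<forall>h\<in>H. \<forall>s\<in>space Ms. \<bar>h s\<bar> \<le> 1"
  shows "AE \<omega> in M. \<forall>\<epsilon>>0. \<forall>h1\<in>H. \<forall>h2\<in>H.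
           rhoN K n P (\<lambda>i. (S i \<omega>, Y i \<omega>)) (liftS (\<lambda>s. h1 s - h2 s)) \<le> \<epsilon> \<longrightarrow>
           (pop_risk K P h1 - emp_risk K n L A V (\<lambda>i. (S i \<omega>, Y i \<omega>)) h1)
           - (pop_risk K P h2 - emp_risk K n L A V (\<lambda>i. (S i \<omega>, Y i \<omega>)) h2) \<le> 2 * \<epsilon>"
proof -
  interpret prob_space M by (rule M)
  interpret cross_fold_design K n L A V
    by unfold_locales (use L2 Ldvd npos A_range V_range cell_size fold_size in auto)
  have cell_law: "\<forall>a\<in>{1..K}. prob_space (P a) \<and> sets (P a) = sets (Ms \<Otimes>\<^sub>M borel)
                    \<and> (AE x in P a. \<bar>snd x\<bar> \<le> 1)"
    by (rule cell_laws_bounded[OF M]) (use S_meas Y_meas ident Y_bound in auto)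
  have "AE \<omega> in M. \<forall>i\<in>{..<K*n}. \<bar>Y i \<omega>\<bar> \<le> 1"
    using Y_bound by (subst eventually_ball_finite_distrib) auto
  then show ?thesis
    using AE_space
  proof eventually_elim
    case (elim \<omega>)
    let ?d = "\<lambda>i. (S i \<omega>, Y i \<omega>)"
    show ?case
    proof (intro allI impI ballI)
      fix \<epsilon> :: real and h1 h2 assume h1: "h1 \<in> H" and h2: "h2 \<in> H"
        and rho: "rhoN K n P ?d (liftS (\<lambda>s. h1 s - h2 s)) \<le> \<epsilon>"
      have S_space: "S i \<omega> \<in> space Ms" if "i < K*n" for i
        using S_meas that elim(2) by (auto intro: measurable_space)
      have "\<bar>pop_risk K P h1 - pop_risk K P h2\<bar> \<le> 2 * norm1K K (Pi_pop P (liftS (\<lambda>s. h1 s - h2 s)))"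
        by (rule pop_risk_diff_le[OF cell_law]) (use H_meas H_bound h1 h2 in auto)
      moreover have "\<bar>emp_risk K n L A V ?d h1 - emp_risk K n L A V ?d h2\<bar>
          \<le> 2 * norm1N K n ?d (liftS (\<lambda>s. h1 s - h2 s))"
        by (intro emp_risk_diff_le) (use elim(1) S_space H_bound h1 h2 in auto)
      ultimately show "(pop_risk K P h1 - emp_risk K n L A V ?d h1)
          - (pop_risk K P h2 - emp_risk K n L A V ?d h2) \<le> 2 * \<epsilon>"
        using rho unfolding rhoN_def by (simp add: abs_le_iff)
    qed
  qed
qed

end
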